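(* Let $(W,V)$ be an independent-type $\mathcal Y$-valued transition matrix on $\mathcal X$ with $W(x|x')=\frac1d$ for all $x,x'\in\mathcal X$, and let $P$ be a distribution on $\mathcal X$. Then $$\mathcal L^I_{2,W,V}=\big\{([W,A],(A^TV_y)_{y\in\mathcal Y})\in\mathcal G^I:\ A\in M_d(\mathbb R),\ A^Tu_{\mathcal X}=0\big\},$$ $$\mathcal L^I_{2,P,W,V}=\big\{([W,A],(A^TV_y)_{y\in\mathcal Y})\in\mathcal G^I:\ A\in M_d(\mathbb R),\ A^Tu_{\mathcal X}=0,\ AP=0\big\},$$ where $[X,Y]=XY-YX$.
   Context: Let $\mathcal X=\{1,\dots,d\}$, $\mathcal Y=\{1,\dots,d_Y\}$, $u_{\mathcal X}\in\mathbb R^{\mathcal X}$ the all-ones vector. An independent-type $\mathcal Y$-valued transition matrix $(W,V)$ consists of a column-stochastic $d\times d$ matrix $W(x|x')$ and a transition matrix $V$ from $\mathcal X$ to $\mathcal Y$ ($V(y|x')\ge0$, $\sum_yV(y|x')=1$), defining $W_y:=WD(V_y)$, where $V_y\in\mathbb R^{\mathcal X}$, $V_y(x')=V(y|x')$, and $D(v)$ is the diagonal matrix with diagonal $v$. $\mathcal G^I$ is the set of pairs $(B,C)$ with $B$ a real $d\times d$ matrix vanishing wherever $W(x|x')=0$ and $C=(C_y)_{y\in\mathcal Y}$, $C_y\in\mathbb R^{\mathcal X}$, $C_y(x')=0$ wherever $V(y|x')=0$. $\mathcal L^I_{1,W,V}:=\{(B,C)\in\mathcal G^I: B^Tu_{\mathcal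 X}=0,\ \sum_yC_y=0\}$. Let $\mathcal L_2:=\{(W_yA-AW_y)_{y\in\mathcal Y}: A\in M_d(\mathbb R),\ A^Tu_{\mathcal X}=0\}$ and $\mathcal L_{2,P}:=\{(W_yA-AW_y)_{y}: A^Tu_{\mathcal X}=0,\ AP=0\}$. Then $\mathcal L^I_{2,W,V}:=\{(B,C)\in\mathcal L^I_{1,W,V}: (BD(V_y)+WD(C_y))_{y}\in\mathcal L_2\}$ and $\mathcal L^I_{2,P,W,V}:=\{(B,C)\in\mathcal L^I_{1,W,V}:(BD(V_y)+WD(C_y))_y\in\mathcal L_{2,P}\}$. *)

theory Defs
  imports "HOL-Analysis.Analysis"
begin

text \<open>Matrices are real^'x^'x with
  M $ x $ x' the entry in row x, column x'.
  A transition matrix V from X to Y is given as the family (V_y)_y, V y $ x' = V(y|x').\<close>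

definition Dmat :: "real^'n \<Rightarrow> real^'n^'n" where
  "Dmat v = (\<chi> i j. if i = j then v $ i else 0)"

definition uvec :: "real^'n" where
  "uvec = (\<chi> i. 1)"

definition column_stochastic :: "real^'x^'x \<Rightarrow> bool" where
  "column_stochastic W \<longleftrightarrow> (\<forall>x x'. W $ x $ x' \<ge> 0) \<and> (\<forall>x'. (\<Sum>x\<in>UNIV. W $ x $ x') = 1)"

definition transition_XY :: "('y::finite \<Rightarrow> real^'x) \<Rightarrow> bool" where
  "transition_XY V \<longleftrightarrow> (\<forall>y x'. V y $ x' \<ge> 0) \<and> (\<forall>x'. (\<Sum>y\<in>UNIV. V y $ x') = 1)"

definition indep_transition :: "real^'x^'x \<Rightarrow> ('y::finite \<Rightarrow> real^'x) \<Rightarrow> bool" where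
  "indep_transition W V \<longleftrightarrow> column_stochastic W \<and> transition_XY V"

definition Wy :: "real^'x^'x \<Rightarrow> ('y \<Rightarrow> real^'x) \<Rightarrow> 'y \<Rightarrow> real^'x^'x" where
  "Wy W V y = W ** Dmat (V y)"

definition GI :: "real^'x^'x \<Rightarrow> ('y \<Rightarrow> real^'x) \<Rightarrow> ((real^'x^'x) \<times> ('y \<Rightarrow> real^'x)) set" where
  "GI W V = {(B, C). (\<forall>x x'. W $ x $ x' = 0 \<longrightarrow> B $ x $ x' = 0)
                   \<and> (\<forall>y x'. V y $ x' = 0 \<longrightarrow> C y $ x' = 0)}"

definition L1I :: "real^'x^'x \<Rightarrow> ('y::finite \<Rightarrow> real^'x) \<Rightarrow> ((real^'x^'x) \<times> ('y \<Rightarrow> real^'x)) set" where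
  "L1I W V = {(B, C). (B, C) \<in> GI W V \<and> transpose B *v uvec = 0 \<and> (\<Sum>y\<in>UNIV. C y) = 0}"

definition L2 :: "real^'x^'x \<Rightarrow> ('y \<Rightarrow> real^'x) \<Rightarrow> ('y \<Rightarrow> real^'x^'x) set" where
  "L2 W V = {(\<lambda>y. Wy W V y ** A - A ** Wy W V y) | A. transpose A *v uvec = 0}"

definition L2P :: "real^'x \<Rightarrow> real^'x^'x \<Rightarrow> ('y \<Rightarrow> real^'x) \<Rightarrow> ('y \<Rightarrow> real^'x^'x) set" where
  "L2P P W V = {(\<lambda>y. Wy W V y ** A - A ** Wy W V y) | A. transpose A *v uvec = 0 \<and> A *v P = 0}"

definition L2I :: "real^'x^'x \<Rightarrow> ('y::finite \<Rightarrow> real^'x) \<Rightarrow> ((real^'x^'x) \<times> ('y \<Rightarrow> real^'x)) set" where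
  "L2I W V = {(B, C). (B, C) \<in> L1I W V \<and> (\<lambda>y. B ** Dmat (V y) + W ** Dmat (C y)) \<in> L2 W V}"

definition L2PI :: "real^'x \<Rightarrow> real^'x^'x \<Rightarrow> ('y::finite \<Rightarrow> real^'x) \<Rightarrow> ((real^'x^'x) \<times> ('y \<Rightarrow> real^'x)) set" where
  "L2PI P W V = {(B, C). (B, C) \<in> L1I W V \<and> (\<lambda>y. B ** Dmat (V y) + W ** Dmat (C y)) \<in> L2P P W V}"

definition distribution :: "real^'x \<Rightarrow> bool" where
  "distribution P \<longleftrightarrow> (\<forall>x. P $ x \<ge> 0) \<and> (\<Sum>x\<in>UNIV. P $ x) = 1"

definition commutator :: "real^'n^'n \<Rightarrow> real^'n^'n \<Rightarrow> real^'n^'n" where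
  "commutator X Y = X ** Y - Y ** X"

end

theory Submission imports Defs begin

text \<open>For the uniform matrix \<open>W = J/d\<close>, every \<open>A\<close> with zero column sums satisfies
  \<open>W A = 0\<close> and \<open>W D(v) A = W D(A\<^sup>T v)\<close>, hence
  \<open>W\<^sub>y A - A W\<^sub>y = [W,A] D(V\<^sub>y) + W D(A\<^sup>T V\<^sub>y)\<close>: the pair \<open>([W,A], (A\<^sup>T V\<^sub>y)\<^sub>y)\<close> solves the
  defining equation of \<open>\<L>\<^sub>2\<close>. It is the only solution with the same \<open>\<Sum>\<^sub>y C\<^sub>y\<close>: summing the equation
  over \<open>y\<close> and using \<open>\<Sum>\<^sub>y V\<^sub>y = u\<close> recovers \<open>B\<close>, and since no column of \<open>W\<close> vanishes,
  \<open>W D(C\<^sub>y)\<close> determines \<open>C\<^sub>y\<close>.\<close>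

lemma Dmat_add: "Dmat (v + w) = Dmat v + Dmat w"
  by (simp add: Dmat_def vec_eq_iff)

lemma Dmat_zero [simp]: "Dmat 0 = 0"
  by (simp add: Dmat_def vec_eq_iff)

lemma Dmat_sum: "Dmat (\<Sum>i\<in>I. v i) = (\<Sum>i\<in>I. Dmat (v i))"
  by (induction I rule: infinite_finite_induct) (simp_all add: Dmat_add)

lemma Dmat_uvec [simp]: "Dmat uvec = mat 1"
  by (simp add: Dmat_def uvec_def mat_def vec_eq_iff)

lemma matrix_mult_Dmat_component: "(A ** Dmat v) $ i $ j = A $ i $ j * v $ j"
  by (simp add: matrix_matrix_mult_def Dmat_def if_distrib cong: if_cong)

lemma matrix_matrix_mult_component: "(A ** B) $ i $ j = (\<Sum>k\<in>UNIV. A $ i $ k * B $ k $ j)"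
  by (simp add: matrix_matrix_mult_def)

lemma matrix_mult_sum_right: "A ** (\<Sum>i\<in>I. M i) = (\<Sum>i\<in>I. A ** M i)"
  by (induction I rule: infinite_finite_induct) (simp_all add: matrix_add_ldistrib)

lemma matrix_diff_rdistrib: "(A - B) ** C = A ** C - B ** (C :: 'a::ring_1^_^_)"
  by (vector matrix_matrix_mult_def sum_subtractf left_diff_distrib)

lemma transition_XY_sum: "transition_XY V \<Longrightarrow> (\<Sum>y\<in>UNIV. V y) = uvec"
  by (simp add: transition_XY_def uvec_def vec_eq_iff sum_component)

lemma matrix_mult_Dmat_inj:
  assumes "\<forall>j. \<exists>i. W $ i $ j \<noteq> 0" and "W ** Dmat v = W ** Dmat w"
  shows "v = w"
proof (rule vec_eq_iff[THEN iffD2], rule allI)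
  fix j
  obtain i where "W $ i $ j \<noteq> 0" using assms(1) by blast
  moreover have "W $ i $ j * v $ j = W $ i $ j * w $ j"
    using arg_cong[OF assms(2), of "\<lambda>M. M $ i $ j"] by (simp add: matrix_mult_Dmat_component)
  ultimately show "v $ j = w $ j" by simp
qed

lemma Dmat_decomposition_unique:
  fixes V C C' :: "'y::finite \<Rightarrow> real^'x"
  assumes V: "(\<Sum>y\<in>UNIV. V y) = uvec"
    and W: "\<forall>j. \<exists>i. W $ i $ j \<noteq> 0"
    and C: "(\<Sum>y\<in>UNIV. C y) = (\<Sum>y\<in>UNIV. C' y)"
    and eq: "\<forall>y. B ** Dmat (V y) + W ** Dmat (C y) = B' ** Dmat (V y) + W ** Dmat (C' y)"
  shows "B = B' \<and> C = C'"
proof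
  have sum_eq: "(\<Sum>y\<in>UNIV. M ** Dmat (V y) + W ** Dmat (D y)) = M + W ** Dmat (\<Sum>y\<in>UNIV. D y)"
    for M and D :: "'y \<Rightarrow> real^'x"
  proof -
    have "(\<Sum>y\<in>UNIV. Dmat (V y)) = mat 1"
      using arg_cong[OF V, of Dmat] by (simp add: Dmat_sum)
    then show ?thesis
      by (simp add: sum.distrib Dmat_sum matrix_mult_sum_right[symmetric])
  qed
  show "B = B'"
    using sum_eq[of B C] sum_eq[of B' C'] eq C by simp
  with eq show "C = C'"
    using matrix_mult_Dmat_inj[OF W] by auto
qed

lemma column_stochastic_colsum: "column_stochastic W \<Longrightarrow> transpose W *v uvec = uvec"
  by (simp add: column_stochastic_def uvec_def vector_matrix_mult_def vec_eq_iff)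

lemma commutator_colsum:
  fixes W A :: "real^'x^'x"
  assumes "column_stochastic W" and "transpose A *v uvec = 0"
  shows "transpose (commutator W A) *v uvec = 0"
proof -
  have "x v* (M - N) = x v* M - x v* N" for x and M N :: "real^'x^'x"
    by (simp add: vector_matrix_mult_def vec_eq_iff right_diff_distrib sum_subtractf)
  then show ?thesis
    using assms column_stochastic_colsum[OF assms(1)]
    by (simp add: commutator_def vector_matrix_mul_assoc[symmetric])
qed

lemma uniform_mult_colsum_zero:
  fixes W A :: "real^'x^'x"
  assumes W: "\<forall>x x'. W $ x $ x' = 1 / real CARD('x)" and A: "transpose A *v uvec = 0"
  shows "W ** A = 0"
proof -
  have "(\<Sum>k\<in>UNIV. A $ k $ j) = 0" for j
    using arg_cong[OF A, of "\<lambda>v. v $ j"] by (simp add: vector_matrix_mult_def uvec_def)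
  then show ?thesis
    using W by (simp add: vec_eq_iff matrix_matrix_mult_component sum_divide_distrib[symmetric])
qed

lemma uniform_mult_Dmat_mult:
  fixes W A :: "real^'x^'x"
  assumes W: "\<forall>x x'. W $ x $ x' = 1 / real CARD('x)"
  shows "W ** Dmat v ** A = W ** Dmat (transpose A *v v)"
proof (rule vec_eq_iff[THEN iffD2, OF allI], rule vec_eq_iff[THEN iffD2, OF allI])
  fix i j
  have "(W ** Dmat v ** A) $ i $ j = (\<Sum>k\<in>UNIV. W $ i $ k * v $ k * A $ k $ j)"
    unfolding matrix_matrix_mult_component[of "W ** Dmat v"] matrix_mult_Dmat_component ..
  also have "\<dots> = W $ i $ j * (transpose A *v v) $ j"
    using W by (simp add: vector_matrix_mult_def sum_divide_distrib mult.commute)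
  finally show "(W ** Dmat v ** A) $ i $ j = (W ** Dmat (transpose A *v v)) $ i $ j"
    by (simp only: matrix_mult_Dmat_component)
qed

lemma uniform_commutator_identity:
  fixes W A :: "real^'x^'x"
  assumes W: "\<forall>x x'. W $ x $ x' = 1 / real CARD('x)" and A: "transpose A *v uvec = 0"
  shows "(W ** Dmat v) ** A - A ** (W ** Dmat v) = commutator W A ** Dmat v + W ** Dmat (transpose A *v v)"
  unfolding commutator_def matrix_diff_rdistrib
  by (simp add: uniform_mult_colsum_zero[OF W A] uniform_mult_Dmat_mult[OF W] matrix_mul_assoc)

lemma uniform_L2_pair_iff:
  fixes W A :: "real^'x^'x" and V :: "'y::finite \<Rightarrow> real^'x"
  assumes WV: "indep_transition W V"
    and W: "\<forall>x x'. W $ x $ x' = 1 / real CARD('x)"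
    and A: "transpose A *v uvec = 0"
  shows "(B, C) \<in> L1I W V \<and>
      (\<lambda>y. B ** Dmat (V y) + W ** Dmat (C y)) = (\<lambda>y. Wy W V y ** A - A ** Wy W V y)
    \<longleftrightarrow> (B, C) \<in> GI W V \<and> B = commutator W A \<and> C = (\<lambda>y. transpose A *v V y)"
proof -
  have V: "(\<Sum>y\<in>UNIV. V y) = uvec" and cs: "column_stochastic W"
    using WV by (simp_all add: indep_transition_def transition_XY_sum)
  have W_nonzero: "\<forall>j. \<exists>i. W $ i $ j \<noteq> 0"
    using W by simp
  have rhs: "(\<lambda>y. Wy W V y ** A - A ** Wy W V y)
      = (\<lambda>y. commutator W A ** Dmat (V y) + W ** Dmat (transpose A *v V y))"
    by (simp add: Wy_def uniform_commutator_identity[OF W A])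
  have C_sum: "(\<Sum>y\<in>UNIV. transpose A *v V y) = 0"
    using linear_sum[OF matrix_vector_mul_linear[of "transpose A"], of V UNIV] A V by simp
  show ?thesis
  proof
    assume "(B, C) \<in> L1I W V \<and>
      (\<lambda>y. B ** Dmat (V y) + W ** Dmat (C y)) = (\<lambda>y. Wy W V y ** A - A ** Wy W V y)"
    then have G: "(B, C) \<in> GI W V" and "(\<Sum>y\<in>UNIV. C y) = (\<Sum>y\<in>UNIV. transpose A *v V y)"
      and "\<forall>y. B ** Dmat (V y) + W ** Dmat (C y)
          = commutator W A ** Dmat (V y) + W ** Dmat (transpose A *v V y)"
      by (simp_all only: L1I_def C_sum rhs fun_eq_iff) auto
    with G show "(B, C) \<in> GI W V \<and> B = commutator W A \<and> C = (\<lambda>y. transpose A *v V y)"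
      using Dmat_decomposition_unique[OF V W_nonzero] by blast
  next
    assume "(B, C) \<in> GI W V \<and> B = commutator W A \<and> C = (\<lambda>y. transpose A *v V y)"
    then show "(B, C) \<in> L1I W V \<and>
      (\<lambda>y. B ** Dmat (V y) + W ** Dmat (C y)) = (\<lambda>y. Wy W V y ** A - A ** Wy W V y)"
      using commutator_colsum[OF cs A] C_sum by (auto simp: L1I_def rhs)
  qed
qed

lemma uniform_L2_pairs_eq:
  fixes W :: "real^'x^'x" and V :: "'y::finite \<Rightarrow> real^'x"
  assumes "indep_transition W V" and "\<forall>x x'. W $ x $ x' = 1 / real CARD('x)"
  shows "{(B, C). (B, C) \<in> L1I W V \<and> (\<lambda>y. B ** Dmat (V y) + W ** Dmat (C y))
            \<in> {(\<lambda>y. Wy W V y ** A - A ** Wy W V y) | A. transpose A *v uvec = 0 \<and> Q A}}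
    = {(B, C). (B, C) \<in> GI W V \<and>
        (\<exists>A. transpose A *v uvec = 0 \<and> Q A \<and> B = commutator W A \<and> C = (\<lambda>y. transpose A *v V y))}"
    (is "?S = ?T")
proof (rule set_eqI)
  fix z :: "(real^'x^'x) \<times> ('y \<Rightarrow> real^'x)"
  obtain B C where z: "z = (B, C)" by fastforce
  show "z \<in> ?S \<longleftrightarrow> z \<in> ?T"
    unfolding z mem_Collect_eq case_prod_conv using uniform_L2_pair_iff[OF assms, of _ B C] by blast
qed

theorem corollary3:
  fixes W :: "real^'x^'x" and V :: "'y::finite \<Rightarrow> real^'x" and P :: "real^'x"
  assumes "indep_transition W V"
    and "\<forall>x x'. W $ x $ x' = 1 / real CARD('x)"
    and "distribution P" \<comment> \<open>not needed\<close>
  shows "(L2I W V = {(B, C). (B, C) \<in> GI W V \<and>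
            (\<exists>A. transpose A *v uvec = 0 \<and> B = commutator W A \<and> C = (\<lambda>y. transpose A *v V y))})
    \<and> (L2PI P W V = {(B, C). (B, C) \<in> GI W V \<and>
            (\<exists>A. transpose A *v uvec = 0 \<and> A *v P = 0 \<and> B = commutator W A \<and> C = (\<lambda>y. transpose A *v V y))})"
  using uniform_L2_pairs_eq[OF assms(1,2), where Q = "\<lambda>_. True"]
    uniform_L2_pairs_eq[OF assms(1,2), where Q = "\<lambda>A. A *v P = 0"]
  unfolding L2I_def L2_def L2PI_def L2P_def by simp

end
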